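(* Let $d\ge1$. For all $p,q\in\mathcal P_d$, if $\mathcal A(p)=\mathcal A(q)$ then $q=cp$ for some $c\in\mathbb C$ with $|c|=1$; that is, $\mathcal A(p)$ determines the equivalence class $[p]=\{cp:|c|=1\}$.
   Context: $\mathcal P_d$ is the space of complex polynomials of degree at most $d-1$ on the unit circle. Let $\omega=e^{2\pi i/(2d-1)}$, $\nu=e^{2\pi i/d}$. The map $\mathcal A:\mathcal P_d\to\mathbb R^{6d-3}$ is $(\mathcal A(p))_j=|p(\omega^j)|^2$ for $1\le j\le 2d-1$, $|p(\omega^j)-p(\omega^j\nu)|^2$ for $2d\le j\le4d-2$, and $|p(\omega^j)-ip(\omega^j\nu)|^2$ for $4d-1\le j\le 6d-3$. *)

theory Defs
  imports "HOL-Analysis.Analysis" "HOL-Computational_Algebra.Polynomial"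
begin

definition omega :: "nat \<Rightarrow> complex" where
  "omega d = cis (2 * pi / real (2 * d - 1))"

definition nu :: "nat \<Rightarrow> complex" where
  "nu d = cis (2 * pi / real d)"

definition Pd :: "nat \<Rightarrow> complex poly set" where
  "Pd d = {p. degree p \<le> d - 1}"

definition Ameas :: "nat \<Rightarrow> complex poly \<Rightarrow> nat \<Rightarrow> real" where
  "Ameas d p j =
     (if 1 \<le> j \<and> j \<le> 2*d - 1 then (cmod (poly p (omega d ^ j)))\<^sup>2
      else if 2*d \<le> j \<and> j \<le> 4*d - 2 then
        (cmod (poly p (omega d ^ j) - poly p (omega d ^ j * nu d)))\<^sup>2
      else if 4*d - 1 \<le> j \<and> j \<le> 6*d - 3 then
        (cmod (poly p (omega d ^ j) - \<i> * poly p (omega d ^ j * nu d)))\<^sup>2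
      else 0)"

end

theory Submission
  imports Defs "HOL-Computational_Algebra.Polynomial_Factorial" "HOL-Computational_Algebra.Field_as_Ring"
begin

text \<open>
  Let \<open>R p\<close> be the conjugate reflection of \<open>p\<close>. For \<open>|z| = |a| = 1\<close> the polynomial
  \<open>p \<cdot> R p(a \<cdot>)\<close>, of degree at most \<open>2d - 2\<close>, takes the value
  \<open>(a z)\<^bsup>d - 1\<^esup> p(z) cnj (p (a z))\<close> at \<open>z\<close>, so these products at the \<open>2d - 1\<close> points
  \<open>\<omega>\<^sup>j\<close> determine it. The first block of measurements gives \<open>p \<cdot> R p\<close>, hence \<open>|p|\<close> on the
  whole circle; by polarization the other two blocks then give \<open>p(\<omega>\<^sup>j) cnj (p (\<omega>\<^sup>j \<nu>))\<close>,
  hence \<open>p \<cdot> R p(\<nu> \<cdot>)\<close>. Comparing the two identities, \<open>q / p\<close> is invariant under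
  \<open>z \<mapsto> \<nu> z\<close>; as \<open>\<nu>\<close> is a primitive \<open>d\<close>-th root of unity and the degrees are below \<open>d\<close>,
  \<open>q / p\<close> is a constant \<open>c\<close>, and \<open>|c| = 1\<close> because \<open>|p| = |q|\<close> on the circle.
\<close>

lemma roots_unity_eq_cis_powers:
  assumes "n > 0"
  shows "{z::complex. z ^ n = 1} = (\<lambda>j. cis (2 * pi / n) ^ j) ` {1..n}"
proof
  have root_n: "cis (2 * pi / n) ^ n = 1"
    unfolding Complex.DeMoivre using assms by simp
  show "{z. z ^ n = 1} \<subseteq> (\<lambda>j. cis (2 * pi / n) ^ j) ` {1..n}"
  proof
    fix z :: complex
    assume "z \<in> {z. z ^ n = 1}"
    then obtain k where "k < n" and "z = cis (2 * pi * k / n)"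
      using Complex.bij_betw_roots_unity[OF assms] by (auto simp: bij_betw_def)
    then have z: "z = cis (2 * pi / n) ^ k"
      by (simp add: Complex.DeMoivre mult_ac)
    show "z \<in> (\<lambda>j. cis (2 * pi / n) ^ j) ` {1..n}"
    proof (cases "k = 0")
      case True
      then show ?thesis
        using z root_n assms by (intro image_eqI[of _ _ n]) auto
    next
      case False
      then show ?thesis
        using z \<open>k < n\<close> by auto
    qed
  qed
  show "(\<lambda>j. cis (2 * pi / n) ^ j) ` {1..n} \<subseteq> {z. z ^ n = 1}"
    using root_n by (auto simp flip: power_mult simp: mult.commute[of _ n] power_mult)
qed

lemma cis_root_pow_neq_1:
  fixes k n :: nat
  assumes "0 < k" "k < n"
  shows "cis (2 * pi / n) ^ k \<noteq> 1"
proof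
  assume "cis (2 * pi / n) ^ k = 1"
  then have "cis (2 * pi * real k / n) = cis (2 * pi * real 0 / n)"
    unfolding Complex.DeMoivre by (simp add: mult_ac)
  then have "k = 0"
    using Complex.bij_betw_roots_unity[of n] assms
    by (auto simp: bij_betw_def inj_on_def)
  with assms show False by simp
qed

lemma poly_eq_0_if_zero_at_roots_unity:
  fixes P :: "complex poly"
  assumes "degree P < n" and "\<And>j. j \<in> {1..n} \<Longrightarrow> poly P (cis (2 * pi / n) ^ j) = 0"
  shows "P = 0"
proof (rule poly_eqI_degree[where A = "{z. z ^ n = 1}"])
  have "n > 0" using assms(1) by simp
  then show "poly P z = poly 0 z" if "z \<in> {z. z ^ n = 1}" for z
    using that assms(2) roots_unity_eq_cis_powers by auto
  show "degree P < card {z::complex. z ^ n = 1}" "degree (0::complex poly) < card {z::complex. z ^ n = 1}"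
    using assms(1) \<open>n > 0\<close> by (simp_all add: card_roots_unity_eq)
qed

lemma mult_cnj_eq_iff_norm_eq: "a * cnj a = b * cnj b \<longleftrightarrow> cmod a = cmod b"
  by (metis complex_norm_square norm_ge_zero of_real_eq_iff power2_eq_iff_nonneg)

lemma mult_cnj_eqI_polarization:
  fixes u v x y :: complex
  assumes "cmod u = cmod x" and "cmod v = cmod y"
    and "cmod (u - v) = cmod (x - y)" and "cmod (u - \<i> * v) = cmod (x - \<i> * y)"
  shows "u * cnj v = x * cnj y"
proof -
  note sq = mult_cnj_eq_iff_norm_eq[THEN iffD2]
  have sum_eq: "u * cnj v + v * cnj u = x * cnj y + y * cnj x"
    using sq[OF assms(1)] sq[OF assms(2)] sq[OF assms(3)] by (simp add: algebra_simps)
  have "\<i> * (u * cnj v - v * cnj u) = \<i> * (x * cnj y - y * cnj x)"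
    using sq[OF assms(1)] sq[OF assms(2)] sq[OF assms(4)] by (simp add: algebra_simps)
  then have diff_eq: "u * cnj v - v * cnj u = x * cnj y - y * cnj x"
    by simp
  have "2 * (u * cnj v) = (u * cnj v + v * cnj u) + (u * cnj v - v * cnj u)"
    by simp
  also have "\<dots> = (x * cnj y + y * cnj x) + (x * cnj y - y * cnj x)"
    unfolding sum_eq diff_eq ..
  also have "\<dots> = 2 * (x * cnj y)"
    by simp
  finally show ?thesis
    by simp
qed

text \<open>Unlike \<open>reflect_poly\<close>, this reflects with respect to the formal degree \<open>d - 1\<close>
  rather than \<open>degree p\<close>.\<close>
definition conj_reflect :: "nat \<Rightarrow> complex poly \<Rightarrow> complex poly" where
  "conj_reflect d p = (\<Sum>k<d. monom (cnj (coeff p k)) (d - 1 - k))"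

lemma degree_conj_reflect_le: "degree (conj_reflect d p) \<le> d - 1"
  unfolding conj_reflect_def
  by (rule degree_sum_le) (auto intro: order.trans[OF degree_monom_le])

lemma poly_conj_reflect_unit_circle:
  assumes "cmod z = 1" and "degree p < d"
  shows "poly (conj_reflect d p) z = z ^ (d - 1) * cnj (poly p z)"
proof -
  have "z ^ (d - 1) * cnj z ^ k = z ^ (d - 1 - k)" if "k < d" for k
  proof -
    have "z ^ (d - 1) = z ^ (d - 1 - k) * z ^ k"
      using that by (simp flip: power_add)
    moreover have "z * cnj z = 1"
      using assms(1) by (simp add: complex_norm_square[symmetric])
    ultimately show ?thesis
      by (simp add: mult.assoc flip: power_mult_distrib)
  qed
  moreover have "poly p z = (\<Sum>k<d. coeff p k * z ^ k)"
    unfolding poly_altdef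
    by (rule sum.mono_neutral_left) (use assms(2) in \<open>auto simp: coeff_eq_0\<close>)
  ultimately show ?thesis
    by (simp add: conj_reflect_def poly_sum poly_monom sum_distrib_left mult.left_commute)
qed

lemma conj_reflect_eq_0_iff:
  assumes "degree p < d"
  shows "conj_reflect d p = 0 \<longleftrightarrow> p = 0"
proof
  assume reflect_0: "conj_reflect d p = 0"
  show "p = 0"
  proof (rule poly_eq_0_if_zero_at_roots_unity[OF assms])
    fix j
    let ?z = "cis (2 * pi / d) ^ j"
    have "cmod ?z = 1"
      by (simp add: norm_power)
    then have "?z ^ (d - 1) * cnj (poly p ?z) = 0"
      using poly_conj_reflect_unit_circle[OF _ assms, of ?z] reflect_0 by simp
    then show "poly p ?z = 0"
      by simp
  qed
qed (simp add: conj_reflect_def)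

lemma conj_reflect_product_eqI:
  fixes p q :: "complex poly" and a :: complex
  assumes "degree p < d" and "degree q < d" and "cmod a = 1"
    and values_eq: "\<And>j. j \<in> {1..2 * d - 1} \<Longrightarrow>
      poly p (omega d ^ j) * cnj (poly p (omega d ^ j * a))
        = poly q (omega d ^ j) * cnj (poly q (omega d ^ j * a))"
  shows "p * pcompose (conj_reflect d p) [:0, a:] = q * pcompose (conj_reflect d q) [:0, a:]"
proof -
  define F where "F f = f * pcompose (conj_reflect d f) [:0, a:]" for f
  have degree_F: "degree (F f) < 2 * d - 1" if "degree f < d" for f
  proof -
    have "degree (F f) \<le> degree f + degree (pcompose (conj_reflect d f) [:0, a:])"
      unfolding F_def by (rule degree_mult_le)
    also have "\<dots> \<le> degree f + degree (conj_reflect d f)"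
      using degree_pcompose_le[of "conj_reflect d f" "[:0, a:]"] by (simp split: if_split_asm)
    finally show ?thesis
      using that degree_conj_reflect_le[of d f] by linarith
  qed
  have poly_F: "poly (F f) z = (z * a) ^ (d - 1) * (poly f z * cnj (poly f (z * a)))"
    if "degree f < d" "cmod z = 1" for f z
    using poly_conj_reflect_unit_circle[of "z * a" f d] that assms(3)
    by (simp add: F_def poly_pcompose norm_mult mult.commute)
  have "F p - F q = 0"
  proof (rule poly_eq_0_if_zero_at_roots_unity)
    show "degree (F p - F q) < 2 * d - 1"
      using degree_F[OF assms(1)] degree_F[OF assms(2)] degree_diff_le_max[of "F p" "F q"]
      by linarith
    fix j
    assume "j \<in> {1..2 * d - 1}"
    moreover have "cmod (omega d ^ j) = 1"
      by (simp add: omega_def norm_power)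
    ultimately show "poly (F p - F q) (cis (2 * pi / real (2 * d - 1)) ^ j) = 0"
      using poly_F[OF assms(1)] poly_F[OF assms(2)] values_eq by (simp add: omega_def)
  qed
  then show ?thesis
    by (simp add: F_def)
qed

lemma norm_poly_eq_on_unit_circle:
  assumes "p * conj_reflect d p = q * conj_reflect d q"
    and "degree p < d" and "degree q < d" and "cmod z = 1"
  shows "cmod (poly p z) = cmod (poly q z)"
proof -
  have "z ^ (d - 1) * (poly p z * cnj (poly p z)) = z ^ (d - 1) * (poly q z * cnj (poly q z))"
    using arg_cong[OF assms(1), of "\<lambda>f. poly f z"] assms(2-4)
    by (simp add: poly_conj_reflect_unit_circle mult.left_commute)
  moreover have "z \<noteq> 0"
    using assms(4) by auto
  ultimately show ?thesis
    by (simp add: mult_cnj_eq_iff_norm_eq)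
qed

lemma pcompose_scale_cross_eqI:
  fixes p q r s :: "'a::{comm_ring_1, ring_no_zero_divisors} poly"
  assumes "v \<noteq> 0" and "r \<noteq> 0"
    and "p * r = q * s"
    and "p * pcompose r [:0, v:] = q * pcompose s [:0, v:]"
  shows "pcompose p [:0, v:] * q = p * pcompose q [:0, v:]"
proof -
  have scaled: "pcompose p [:0, v:] * pcompose r [:0, v:] = pcompose q [:0, v:] * pcompose s [:0, v:]"
    using arg_cong[OF assms(3), of "\<lambda>f. pcompose f [:0, v:]"] by (simp add: pcompose_mult)
  have "pcompose r [:0, v:] * (pcompose p [:0, v:] * q - p * pcompose q [:0, v:])
      = (pcompose p [:0, v:] * pcompose r [:0, v:]) * q - (p * pcompose r [:0, v:]) * pcompose q [:0, v:]"
    by (simp add: algebra_simps)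
  also have "\<dots> = 0"
    unfolding scaled assms(4) by (simp add: algebra_simps)
  finally show ?thesis
    using assms(1,2) by (simp add: pcompose_eq_0_iff)
qed

lemma pcompose_scale_eq_smult_if_coprime:
  fixes x y :: "'a::field_gcd poly"
  assumes "v \<noteq> 0" and "x \<noteq> 0" and "coprime x y"
    and "pcompose x [:0, v:] * y = x * pcompose y [:0, v:]"
  shows "\<exists>l. pcompose x [:0, v:] = smult l x"
proof -
  have "x dvd pcompose x [:0, v:] * y"
    using assms(4) by simp
  then have "x dvd pcompose x [:0, v:]"
    using assms(3) by (simp add: coprime_dvd_mult_left_iff)
  then obtain k where k: "pcompose x [:0, v:] = x * k"
    by (elim dvdE)
  have "degree (pcompose x [:0, v:]) = degree x"
    using assms(1) by (simp add: degree_pcompose)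
  moreover have "k \<noteq> 0"
    using k assms(1,2) by (auto simp: pcompose_eq_0_iff)
  ultimately have "degree k = 0"
    using k assms(2) by (simp add: degree_mult_eq)
  then have "pcompose x [:0, v:] = smult (coeff k 0) x"
    using k by (metis degree_0_id mult.commute smult_one mult_smult_left mult_1)
  then show ?thesis ..
qed

lemma scale_eigenvalue_eq_pow_if_coeff_neq_0:
  fixes x :: "'a::idom poly"
  assumes "pcompose x [:0, v:] = smult l x" and "coeff x i \<noteq> 0"
  shows "v ^ i = l"
  using arg_cong[OF assms(1), of "\<lambda>f. coeff f i"] assms(2)
  by (simp add: coeff_pcompose_linear)

lemma degree_eq_0_if_pcompose_root_unity_eq:
  fixes x :: "complex poly"
  assumes "degree x < n" and "pcompose x [:0, cis (2 * pi / n):] = x"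
  shows "degree x = 0"
proof (rule ccontr)
  assume "degree x \<noteq> 0"
  then have "x \<noteq> 0"
    by auto
  then have "cis (2 * pi / n) ^ degree x = 1"
    using scale_eigenvalue_eq_pow_if_coeff_neq_0[of x _ 1] assms(2) by simp
  with \<open>degree x \<noteq> 0\<close> assms(1) show False
    using cis_root_pow_neq_1 by blast
qed

lemma degree_eq_0_if_coprime_pcompose_root_unity_cross_eq:
  fixes b e :: "complex poly"
  assumes "b \<noteq> 0" and "e \<noteq> 0" and "coprime b e"
    and "degree b < n" and "degree e < n"
    and cross: "pcompose b [:0, cis (2 * pi / n):] * e = b * pcompose e [:0, cis (2 * pi / n):]"
  shows "degree b = 0 \<and> degree e = 0"
proof -
  let ?v = "cis (2 * pi / n)"
  obtain l where l: "pcompose b [:0, ?v:] = smult l b"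
    using pcompose_scale_eq_smult_if_coprime[OF cis_neq_zero assms(1,3) cross] by blast
  have "coprime e b"
    using assms(3) by (simp add: coprime_commute)
  moreover have "pcompose e [:0, ?v:] * b = e * pcompose b [:0, ?v:]"
    using cross by (simp add: ac_simps)
  ultimately obtain m where m: "pcompose e [:0, ?v:] = smult m e"
    using pcompose_scale_eq_smult_if_coprime[OF cis_neq_zero assms(2)] by blast
  have "smult (l - m) (b * e) = 0"
    using cross l m by (simp add: smult_diff_left)
  then have "l = m"
    using assms(1,2) by simp
  \<comment> \<open>Coprime polynomials are not both divisible by \<open>z\<close>, so the common eigenvalue is \<open>v ^ 0\<close>.\<close>
  have "coeff b 0 \<noteq> 0 \<or> coeff e 0 \<noteq> 0"
  proof (rule ccontr)
    assume "\<not> ?thesis"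
    then have "[:0, 1:] dvd b" and "[:0, 1:] dvd e"
      by (simp_all add: dvd_iff_poly_eq_0 poly_0_coeff_0)
    with assms(3) have "is_unit [:0::complex, 1:]"
      by (metis coprime_common_divisor)
    then show False
      by (simp add: is_unit_iff_degree)
  qed
  then have "l = 1"
    using scale_eigenvalue_eq_pow_if_coeff_neq_0[OF l, of 0]
      scale_eigenvalue_eq_pow_if_coeff_neq_0[OF m, of 0] \<open>l = m\<close> by auto
  then show ?thesis
    using l m \<open>l = m\<close> assms(4,5) degree_eq_0_if_pcompose_root_unity_eq by simp
qed

lemma eq_smult_if_pcompose_root_unity_cross_eq:
  fixes p q :: "complex poly"
  assumes "p \<noteq> 0" and "degree p < n" and "degree q < n"
    and "pcompose p [:0, cis (2 * pi / n):] * q = p * pcompose q [:0, cis (2 * pi / n):]"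
  shows "\<exists>c. q = smult c p"
proof (cases "q = 0")
  case True
  then show ?thesis
    by (intro exI[of _ 0]) simp
next
  case False
  let ?v = "cis (2 * pi / n)"
  define g where "g = gcd p q"
  have "g \<noteq> 0"
    using assms(1) by (simp add: g_def)
  obtain b e where b: "p = b * g" and e: "q = e * g" and coprime: "coprime b e"
    using gcd_coprime_exists[of p q] \<open>g \<noteq> 0\<close> unfolding g_def by blast
  have "b \<noteq> 0" and "e \<noteq> 0"
    using b e assms(1) False by auto
  have "pcompose g [:0, ?v:] \<noteq> 0"
    using \<open>g \<noteq> 0\<close> by (simp add: pcompose_eq_0_iff)
  moreover have "(pcompose b [:0, ?v:] * e) * (g * pcompose g [:0, ?v:])
      = (b * pcompose e [:0, ?v:]) * (g * pcompose g [:0, ?v:])"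
    using assms(4) unfolding b e by (simp add: pcompose_mult mult_ac)
  ultimately have cross: "pcompose b [:0, ?v:] * e = b * pcompose e [:0, ?v:]"
    using \<open>g \<noteq> 0\<close> by simp
  have "degree b < n" and "degree e < n"
    using assms(2,3) \<open>g \<noteq> 0\<close> \<open>b \<noteq> 0\<close> \<open>e \<noteq> 0\<close> unfolding b e by (simp_all add: degree_mult_eq)
  with cross have "degree b = 0 \<and> degree e = 0"
    using degree_eq_0_if_coprime_pcompose_root_unity_cross_eq[OF \<open>b \<noteq> 0\<close> \<open>e \<noteq> 0\<close> coprime]
    by blast
  then obtain \<beta> \<epsilon> where "b = [:\<beta>:]" and "e = [:\<epsilon>:]"
    by (metis degree_0_id)
  with \<open>b \<noteq> 0\<close> have "q = smult (\<epsilon> / \<beta>) p"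
    unfolding b e by simp
  then show ?thesis ..
qed

lemma unimodular_multiple_if_conj_reflect_products_eq:
  fixes p q :: "complex poly"
  assumes "degree p < d" and "degree q < d"
    and autocorrelation: "p * conj_reflect d p = q * conj_reflect d q"
    and cross: "p \<noteq> 0 \<Longrightarrow> pcompose p [:0, nu d:] * q = p * pcompose q [:0, nu d:]"
  shows "\<exists>c. cmod c = 1 \<and> q = smult c p"
proof (cases "p = 0")
  case True
  then show ?thesis
    using autocorrelation assms(2) by (intro exI[of _ 1]) (auto simp: conj_reflect_eq_0_iff)
next
  case False
  then obtain c where c: "q = smult c p"
    using eq_smult_if_pcompose_root_unity_cross_eq[OF False assms(1,2) cross[OF False, unfolded nu_def]]
    by blast
  obtain j where "poly p (cis (2 * pi / d) ^ j) \<noteq> 0"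
    using poly_eq_0_if_zero_at_roots_unity[OF assms(1)] False by blast
  moreover have "cmod (poly p (cis (2 * pi / d) ^ j)) = cmod (poly q (cis (2 * pi / d) ^ j))"
    using norm_poly_eq_on_unit_circle[OF autocorrelation assms(1,2)] by (simp add: norm_power)
  ultimately have "cmod c = 1"
    using c by (simp add: norm_mult)
  with c show ?thesis
    by blast
qed

lemma Ameas_blocks:
  assumes "j \<in> {1..2 * d - 1}"
  shows "Ameas d p j = (cmod (poly p (omega d ^ j)))\<^sup>2"
    and "Ameas d p (j + (2 * d - 1))
      = (cmod (poly p (omega d ^ j) - poly p (omega d ^ j * nu d)))\<^sup>2"
    and "Ameas d p (j + 2 * (2 * d - 1))
      = (cmod (poly p (omega d ^ j) - \<i> * poly p (omega d ^ j * nu d)))\<^sup>2"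
proof -
  have "omega d ^ (2 * d - 1) = 1"
    unfolding omega_def Complex.DeMoivre using assms by simp
  then have periodic: "omega d ^ (j + k * (2 * d - 1)) = omega d ^ j" for k
    by (simp add: power_add power_mult mult.commute[of k])
  show "Ameas d p j = (cmod (poly p (omega d ^ j)))\<^sup>2"
    using assms by (simp add: Ameas_def)
  have "\<not> (1 \<le> j + (2 * d - 1) \<and> j + (2 * d - 1) \<le> 2 * d - 1)"
    "2 * d \<le> j + (2 * d - 1) \<and> j + (2 * d - 1) \<le> 4 * d - 2"
    using assms by auto
  then show "Ameas d p (j + (2 * d - 1))
      = (cmod (poly p (omega d ^ j) - poly p (omega d ^ j * nu d)))\<^sup>2"
    using periodic[of 1] by (simp only: Ameas_def if_False if_True simp_thms mult_1)
  have "\<not> (1 \<le> j + 2 * (2 * d - 1) \<and> j + 2 * (2 * d - 1) \<le> 2 * d - 1)"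
    "\<not> (2 * d \<le> j + 2 * (2 * d - 1) \<and> j + 2 * (2 * d - 1) \<le> 4 * d - 2)"
    "4 * d - 1 \<le> j + 2 * (2 * d - 1) \<and> j + 2 * (2 * d - 1) \<le> 6 * d - 3"
    using assms by auto
  then show "Ameas d p (j + 2 * (2 * d - 1))
      = (cmod (poly p (omega d ^ j) - \<i> * poly p (omega d ^ j * nu d)))\<^sup>2"
    using periodic[of 2] by (simp only: Ameas_def if_False if_True simp_thms)
qed

lemma norms_eq_if_Ameas_eq:
  assumes "\<forall>j \<in> {1..6*d-3}. Ameas d p j = Ameas d q j" and "j \<in> {1..2 * d - 1}"
  shows "cmod (poly p (omega d ^ j)) = cmod (poly q (omega d ^ j))"
    and "cmod (poly p (omega d ^ j) - poly p (omega d ^ j * nu d))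
      = cmod (poly q (omega d ^ j) - poly q (omega d ^ j * nu d))"
    and "cmod (poly p (omega d ^ j) - \<i> * poly p (omega d ^ j * nu d))
      = cmod (poly q (omega d ^ j) - \<i> * poly q (omega d ^ j * nu d))"
proof -
  have "j \<in> {1..6*d-3}" "j + (2 * d - 1) \<in> {1..6*d-3}" "j + 2 * (2 * d - 1) \<in> {1..6*d-3}"
    using assms(2) by auto
  with assms(1) Ameas_blocks[OF assms(2), of p] Ameas_blocks[OF assms(2), of q]
  show "cmod (poly p (omega d ^ j)) = cmod (poly q (omega d ^ j))"
    and "cmod (poly p (omega d ^ j) - poly p (omega d ^ j * nu d))
      = cmod (poly q (omega d ^ j) - poly q (omega d ^ j * nu d))"
    and "cmod (poly p (omega d ^ j) - \<i> * poly p (omega d ^ j * nu d))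
      = cmod (poly q (omega d ^ j) - \<i> * poly q (omega d ^ j * nu d))"
    by simp_all
qed

theorem mainTheorem6:
  fixes d :: nat and p q :: "complex poly"
  assumes "d \<ge> 1"
    and "p \<in> Pd d" and "q \<in> Pd d"
    and "\<forall>j \<in> {1..6*d-3}. Ameas d p j = Ameas d q j"
  shows "\<exists>c::complex. cmod c = 1 \<and> q = smult c p"
proof -
  let ?w = "omega d" and ?v = "nu d"
  note norms_eq = norms_eq_if_Ameas_eq[OF assms(4)]
  have deg: "degree p < d" "degree q < d"
    using assms(1-3) by (auto simp: Pd_def)
  have "cmod ?v = 1"
    by (simp add: nu_def)
  then have "?v \<noteq> 0"
    by auto
  have autocorrelation: "p * conj_reflect d p = q * conj_reflect d q"
    using conj_reflect_product_eqI[OF deg, of 1] norms_eq(1) by (simp add: mult_cnj_eq_iff_norm_eq)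
  have circle_eq: "cmod (poly p (?w ^ j * ?v)) = cmod (poly q (?w ^ j * ?v))" for j
    using norm_poly_eq_on_unit_circle[OF autocorrelation deg] \<open>cmod ?v = 1\<close>
    by (simp add: norm_mult norm_power omega_def)
  have "p * pcompose (conj_reflect d p) [:0, ?v:] = q * pcompose (conj_reflect d q) [:0, ?v:]"
  proof (rule conj_reflect_product_eqI[OF deg \<open>cmod ?v = 1\<close>])
    fix j
    assume j: "j \<in> {1..2 * d - 1}"
    show "poly p (?w ^ j) * cnj (poly p (?w ^ j * ?v)) = poly q (?w ^ j) * cnj (poly q (?w ^ j * ?v))"
      by (rule mult_cnj_eqI_polarization[OF norms_eq(1)[OF j] circle_eq norms_eq(2,3)[OF j]])
  qed
  then have cross: "pcompose p [:0, ?v:] * q = p * pcompose q [:0, ?v:]" if "p \<noteq> 0"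
    using pcompose_scale_cross_eqI[OF \<open>?v \<noteq> 0\<close> _ autocorrelation] that deg(1)
    by (simp add: conj_reflect_eq_0_iff)
  then show ?thesis
    by (rule unimodular_multiple_if_conj_reflect_products_eq[OF deg autocorrelation])
qed

end
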